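(* Let $(\Omega,\mathcal A)$ be a measurable space, let $U$ be an open set in $\mathbb C$, let $f:\Omega\times U\to\mathbb C$ be a random holomorphic function on $U$, and let $K$ be a compact subset of $U$. Then there exists a sequence $R_1,R_2,\ldots$ of random rational functions with poles off $K$ such that, for each $\omega\in\Omega$, $R_n(\omega,\cdot)\to f(\omega,\cdot)$ uniformly on $K$.
   Context: A random holomorphic function on an open set $U$ is a function $f:\Omega\times U\to\mathbb C$ such that $f(\omega,\cdot)$ is holomorphic on $U$ for every $\omega\in\Omega$ and $f(\cdot,z)$ is measurable (Borel sets on $\mathbb C$) for every $z\in U$. A random rational function with poles off $K$ is a function $R(\omega,z)$ such that $R(\omega,\cdot)$ is a rational function with no poles on $K$ for each $\omega$ and $R(\cdot,z)$ is measurable for each $z$. *)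

theory Defs
  imports "HOL-Analysis.Analysis" "HOL-Computational_Algebra.Polynomial"
begin

definition random_holomorphic :: "'a measure \<Rightarrow> complex set \<Rightarrow> ('a \<Rightarrow> complex \<Rightarrow> complex) \<Rightarrow> bool" where
  "random_holomorphic M U f \<longleftrightarrow>
     (\<forall>\<omega>\<in>space M. f \<omega> holomorphic_on U) \<and> (\<forall>z\<in>U. (\<lambda>\<omega>. f \<omega> z) \<in> borel_measurable M)"

text \<open>A rational function p/q (q a nonzero polynomial) with no poles on K; the representation
  is taken with q nonvanishing on K. At zeros of q the value follows HOL's convention x/0 = 0.\<close>
definition rational_no_poles_on :: "complex set \<Rightarrow> (complex \<Rightarrow> complex) \<Rightarrow> bool" where
  "rational_no_poles_on K g \<longleftrightarrow>
     (\<exists>p q :: complex poly. q \<noteq> 0 \<and> (\<forall>z\<in>K. poly q z \<noteq> 0) \<and> (\<forall>z. g z = poly p z / poly q z))"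

definition random_rational_no_poles_on :: "'a measure \<Rightarrow> complex set \<Rightarrow> ('a \<Rightarrow> complex \<Rightarrow> complex) \<Rightarrow> bool" where
  "random_rational_no_poles_on M K R \<longleftrightarrow>
     (\<forall>\<omega>\<in>space M. rational_no_poles_on K (R \<omega>)) \<and> (\<forall>z. (\<lambda>\<omega>. R \<omega> z) \<in> borel_measurable M)"

end

theory Submission
  imports Defs "HOL-Complex_Analysis.Complex_Analysis"
begin

text \<open>Cover \<open>K\<close> by the closed cells of a square grid so fine that every cell meeting \<open>K\<close>
  lies in \<open>U\<close>. Adding Cauchy's integral formula over the boundaries of these finitely many
  cells, the sides shared by two of them cancel, and the remaining sides are segments in
  \<open>U - K\<close>: a fixed finite combination of Cauchy integrals along them reproduces every function
  holomorphic on \<open>U\<close> at every point of \<open>K\<close>. Replacing each segment integral by a Riemann sum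
  over equally spaced nodes yields partial fractions with poles at the nodes, hence off \<open>K\<close>;
  they converge uniformly on \<open>K\<close>, and their coefficients are values \<open>f \<omega> w\<close> at fixed
  points \<open>w\<close>, hence measurable in \<open>\<omega>\<close>.\<close>

section \<open>Cauchy integrals along segments and their Riemann sums\<close>

lemma integral_uniform_partition:
  fixes h :: "real \<Rightarrow> 'a::banach"
  assumes "continuous_on {0..1} h" "n > 0" "m \<le> n"
  shows "integral {0..real m / n} h = (\<Sum>k<m. integral {real k / n..real (Suc k) / n} h)"
  using assms(3)
proof (induction m)
  case 0
  then show ?case by simp
next
  case (Suc m)
  have le: "0 \<le> real m / n" "real m / n \<le> real (Suc m) / n" "real (Suc m) / n \<le> 1"
    using Suc.prems assms(2) by (auto simp: divide_simps)
  have "h integrable_on {0..real (Suc m) / n}"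
    by (rule integrable_continuous_interval, rule continuous_on_subset[OF assms(1)]) (use le in auto)
  then have "integral {0..real (Suc m) / n} h
      = integral {0..real m / n} h + integral {real m / n..real (Suc m) / n} h"
    using Henstock_Kurzweil_Integration.integral_combine[OF le(1,2)] by metis
  then show ?case using Suc by simp
qed

lemma riemann_sum_error_le:
  fixes h :: "real \<Rightarrow> complex"
  assumes cont: "continuous_on {0..1} h" and n: "n > 0"
    and modulus: "\<And>s t. s \<in> {0..1} \<Longrightarrow> t \<in> {0..1} \<Longrightarrow> \<bar>s - t\<bar> \<le> 1 / n \<Longrightarrow> norm (h s - h t) \<le> e"
  shows "norm (integral {0..1} h - (\<Sum>k<n. h (real k / n)) / n) \<le> e"
proof -
  have piece: "norm (integral {real k / n..real (Suc k) / n} h - h (real k / n) / n) \<le> e / n"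
    if k: "k < n" for k
  proof -
    define a where "a = real k / n"
    define b where "b = real (Suc k) / n"
    have ab: "0 \<le> a" "a \<le> b" "b \<le> 1" "b - a = 1 / n"
      using k n by (auto simp: a_def b_def divide_simps)
    have c: "continuous_on {a..b} h" by (rule continuous_on_subset[OF cont]) (use ab in auto)
    have "integral {a..b} (\<lambda>t. h t - h a) = integral {a..b} h - (b - a) *\<^sub>R h a"
      by (subst integral_diff) (use ab in \<open>auto intro!: integrable_continuous_interval c\<close>)
    moreover have "norm (integral {a..b} (\<lambda>t. h t - h a)) \<le> e * (b - a)"
      by (rule integral_bound) (use ab in \<open>auto intro!: continuous_intros c modulus\<close>)
    moreover have "(b - a) *\<^sub>R h a = h a / of_nat n"
      using ab(4) by (simp add: scaleR_conv_of_real field_simps)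
    ultimately show ?thesis using ab(4) by (simp add: a_def b_def)
  qed
  have "integral {0..1} h - (\<Sum>k<n. h (real k / n)) / n
      = (\<Sum>k<n. integral {real k / n..real (Suc k) / n} h - h (real k / n) / n)"
    using integral_uniform_partition[OF cont n order.refl] n
    by (simp add: sum_subtractf sum_divide_distrib)
  also have "norm \<dots> \<le> (\<Sum>k<n. e / n)"
    by (rule sum_norm_le) (use piece in auto)
  also have "\<dots> = e" using n by simp
  finally show ?thesis .
qed

definition segment_cauchy_integral :: "(complex \<Rightarrow> complex) \<Rightarrow> complex \<Rightarrow> complex \<Rightarrow> complex \<Rightarrow> complex"
  where "segment_cauchy_integral g a b z = contour_integral (linepath a b) (\<lambda>w. g w / (w - z))"

definition segment_cauchy_sum :: "(complex \<Rightarrow> complex) \<Rightarrow> complex \<Rightarrow> complex \<Rightarrow> nat \<Rightarrow> complex \<Rightarrow> complex"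
  where "segment_cauchy_sum g a b n z =
    (b - a) / of_nat n * (\<Sum>k<n. g (linepath a b (real k / n)) / (linepath a b (real k / n) - z))"

lemma uniform_limit_segment_cauchy_sum:
  assumes contg: "continuous_on (closed_segment a b) g" and L: "compact L"
    and disj: "L \<inter> closed_segment a b = {}"
  shows "uniform_limit L (segment_cauchy_sum g a b) (segment_cauchy_integral g a b) sequentially"
proof (rule uniform_limitI)
  fix e :: real assume e: "e > 0"
  define \<phi> where "\<phi> = (\<lambda>(t::real, z::complex). g (linepath a b t) / (linepath a b t - z) * (b - a))"
  have seg: "linepath a b t \<in> closed_segment a b" if "t \<in> {0..1}" for t
    using that by (metis atLeastAtMost_iff linepath_in_path)
  have path_cont: "continuous_on ({0..1} \<times> L) (\<lambda>p. linepath a b (fst p))"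
    by (auto simp: linepath_def intro!: continuous_intros)
  have "continuous_on ({0..1} \<times> L) (\<lambda>p. g (linepath a b (fst p)))"
    by (rule continuous_on_compose2[OF contg path_cont]) (auto simp: seg)
  moreover have "linepath a b (fst p) - snd p \<noteq> 0" if "p \<in> {0..1} \<times> L" for p
    using that seg disj by fastforce
  ultimately have cphi: "continuous_on ({0..1} \<times> L) \<phi>"
    unfolding \<phi>_def split_def by (intro continuous_intros path_cont) auto
  have "uniformly_continuous_on ({0..1} \<times> L) \<phi>"
    by (rule compact_uniformly_continuous[OF cphi]) (simp add: compact_Times L)
  then obtain d where d: "d > 0"
    and dd: "\<And>x y. x \<in> {0..1} \<times> L \<Longrightarrow> y \<in> {0..1} \<times> L \<Longrightarrow> dist y x < d \<Longrightarrow> dist (\<phi> y) (\<phi> x) < e / 2"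
    unfolding uniformly_continuous_on_def using e by (meson half_gt_zero)
  obtain N :: nat where N: "1 / d < N" using reals_Archimedean2 by blast
  have "dist (segment_cauchy_sum g a b n z) (segment_cauchy_integral g a b z) < e"
    if n: "N \<le> n" and z: "z \<in> L" for n z
  proof -
    have Npos: "0 < real N" using N d by (smt (verit) divide_pos_pos zero_less_one)
    then have npos: "n > 0" using n by simp
    have "1 / real n \<le> 1 / real N" using Npos n by (simp add: frac_le)
    moreover have "1 / real N < d" using N d Npos by (simp add: field_simps)
    ultimately have nd: "1 / real n < d" by linarith
    have cz: "continuous_on {0..1} (\<lambda>t. \<phi> (t, z))"
      by (rule continuous_on_compose2[OF cphi]) (use z in \<open>auto intro!: continuous_intros\<close>)
    have "norm (integral {0..1} (\<lambda>t. \<phi> (t, z)) - (\<Sum>k<n. \<phi> (real k / n, z)) / n) \<le> e / 2"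
    proof (rule riemann_sum_error_le[OF cz npos])
      fix s t :: real assume st: "s \<in> {0..1}" "t \<in> {0..1}" "\<bar>s - t\<bar> \<le> 1 / n"
      have "dist (s, z) (t, z) < d" using st nd by (simp add: dist_Pair_Pair dist_real_def)
      then have "dist (\<phi> (s, z)) (\<phi> (t, z)) < e / 2" using dd[of "(t,z)" "(s,z)"] st z by auto
      then show "norm (\<phi> (s, z) - \<phi> (t, z)) \<le> e / 2" by (simp add: dist_norm)
    qed
    moreover have "segment_cauchy_integral g a b z = integral {0..1} (\<lambda>t. \<phi> (t, z))"
      by (simp add: segment_cauchy_integral_def contour_integral_integral \<phi>_def)
    moreover have "segment_cauchy_sum g a b n z = (\<Sum>k<n. \<phi> (real k / n, z)) / n"
      by (simp add: segment_cauchy_sum_def \<phi>_def sum_distrib_left sum_divide_distrib mult.commute)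
    ultimately show ?thesis using e by (simp add: dist_norm norm_minus_commute)
  qed
  then show "\<forall>\<^sub>F n in sequentially. \<forall>z\<in>L.
      dist (segment_cauchy_sum g a b n z) (segment_cauchy_integral g a b z) < e"
    unfolding eventually_sequentially by blast
qed

lemma isCont_segment_cauchy_integral:
  assumes g: "continuous_on (closed_segment a b) g" and z: "z \<notin> closed_segment a b"
  shows "isCont (segment_cauchy_integral g a b) z"
proof -
  have "((\<lambda>u. g u / (u - w) ^ 1) has_contour_integral segment_cauchy_integral g a b w) (linepath a b)"
    if "w \<notin> closed_segment a b" for w
  proof -
    have "continuous_on (closed_segment a b) (\<lambda>u. g u / (u - w))"
      using that by (intro continuous_intros g) auto
    then show ?thesis
      unfolding segment_cauchy_integral_def
      by (simp add: has_contour_integral_integral contour_integrable_continuous_linepath)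
  qed
  then have "(segment_cauchy_integral g a b has_field_derivative
      (of_nat 1 * contour_integral (linepath a b) (\<lambda>u. g u / (u - z) ^ Suc 1))) (at z)"
    by (intro Cauchy_next_derivative(2)[where B = "norm (b - a)" and S = UNIV]) (use g z in auto)
  then show ?thesis by (rule DERIV_isCont)
qed

lemma uniform_limit_sum:
  fixes F :: "'i \<Rightarrow> nat \<Rightarrow> 'a \<Rightarrow> 'b::real_normed_vector"
  assumes "finite X" "\<And>x. x \<in> X \<Longrightarrow> uniform_limit L (F x) (G x) sequentially"
  shows "uniform_limit L (\<lambda>n z. \<Sum>x\<in>X. F x n z) (\<lambda>z. \<Sum>x\<in>X. G x z) sequentially"
  using assms
proof (induction X rule: finite_induct)
  case empty
  then show ?case by (simp add: uniform_limit_const)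
next
  case (insert y X)
  have "uniform_limit L (\<lambda>n z. F y n z + (\<Sum>x\<in>X. F x n z)) (\<lambda>z. G y z + (\<Sum>x\<in>X. G x z)) sequentially"
    by (rule uniform_limit_add) (use insert in auto)
  then show ?case using insert.hyps by simp
qed

section \<open>Random partial fraction sums\<close>

text \<open>The value 0 at a pole matches the convention \<open>x / 0 = 0\<close> in the quotient representation
  required by \<^const>\<open>rational_no_poles_on\<close>.\<close>
definition partial_fraction_sum :: "'b set \<Rightarrow> ('b \<Rightarrow> complex) \<Rightarrow> ('b \<Rightarrow> complex) \<Rightarrow> complex \<Rightarrow> complex"
  where "partial_fraction_sum J c w z = (if z \<in> w ` J then 0 else (\<Sum>j\<in>J. c j / (w j - z)))"

lemma partial_fraction_sum_poly_quotient:
  fixes c w :: "'b \<Rightarrow> complex"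
  assumes "finite J"
  shows "\<exists>p q :: complex poly. q \<noteq> 0 \<and> (\<forall>z. poly q z = 0 \<longleftrightarrow> z \<in> w ` J) \<and>
           (\<forall>z. z \<notin> w ` J \<longrightarrow> poly p z / poly q z = (\<Sum>j\<in>J. c j / (w j - z)))"
  using assms
proof (induction J rule: finite_induct)
  case empty
  show ?case by (intro exI[of _ 0] exI[of _ 1]) auto
next
  case (insert j J)
  then obtain p q :: "complex poly" where q: "q \<noteq> 0" and q_zeros: "\<forall>z. poly q z = 0 \<longleftrightarrow> z \<in> w ` J"
    and pq: "\<forall>z. z \<notin> w ` J \<longrightarrow> poly p z / poly q z = (\<Sum>j\<in>J. c j / (w j - z))"
    by blast
  define q' where "q' = [:w j, -1:] * q"
  define p' where "p' = smult (c j) q + [:w j, -1:] * p"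
  have "[:w j, -1:] \<noteq> 0" by simp
  then have "q' \<noteq> 0" using q unfolding q'_def by (metis no_zero_divisors)
  moreover have "\<forall>z. poly q' z = 0 \<longleftrightarrow> z \<in> w ` insert j J"
    using q_zeros by (auto simp: q'_def)
  moreover have "poly p' z / poly q' z = (\<Sum>j\<in>insert j J. c j / (w j - z))"
    if z: "z \<notin> w ` insert j J" for z
  proof -
    have "poly q z \<noteq> 0" "w j - z \<noteq> 0" using q_zeros z by auto
    then have "poly p' z / poly q' z = c j / (w j - z) + poly p z / poly q z"
      by (simp add: p'_def q'_def field_simps)
    then show ?thesis using pq z insert.hyps by simp
  qed
  ultimately show ?case by blast
qed

lemma rational_no_poles_on_partial_fraction_sum:
  assumes "finite J" "w ` J \<inter> K = {}"
  shows "rational_no_poles_on K (partial_fraction_sum J c w)"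
proof -
  obtain p q :: "complex poly" where "q \<noteq> 0" and q_zeros: "\<forall>z. poly q z = 0 \<longleftrightarrow> z \<in> w ` J"
    and pq: "\<forall>z. z \<notin> w ` J \<longrightarrow> poly p z / poly q z = (\<Sum>j\<in>J. c j / (w j - z))"
    using partial_fraction_sum_poly_quotient[OF assms(1)] by blast
  moreover have "\<forall>z\<in>K. poly q z \<noteq> 0" using q_zeros assms(2) by auto
  moreover have "\<forall>z. partial_fraction_sum J c w z = poly p z / poly q z"
    using q_zeros pq by (auto simp: partial_fraction_sum_def)
  ultimately show ?thesis unfolding rational_no_poles_on_def by blast
qed

lemma borel_measurable_partial_fraction_sum:
  assumes "\<And>j. j \<in> J \<Longrightarrow> (\<lambda>\<omega>. c \<omega> j) \<in> borel_measurable M"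
  shows "(\<lambda>\<omega>. partial_fraction_sum J (c \<omega>) w z) \<in> borel_measurable M"
  unfolding partial_fraction_sum_def using assms by measurable

lemma random_rational_approx_segment_integrals:
  fixes a b c :: "'i \<Rightarrow> complex"
  assumes X: "finite X" and K: "compact K"
    and seg: "\<And>x. x \<in> X \<Longrightarrow> closed_segment (a x) (b x) \<subseteq> U - K"
    and cont: "\<And>\<omega>. \<omega> \<in> space M \<Longrightarrow> continuous_on U (f \<omega>)"
    and meas: "\<And>z. z \<in> U \<Longrightarrow> (\<lambda>\<omega>. f \<omega> z) \<in> borel_measurable M"
  obtains R where "\<And>n. random_rational_no_poles_on M K (R n)"
    and "\<And>\<omega>. \<omega> \<in> space M \<Longrightarrow> uniform_limit K (\<lambda>n. R n \<omega>)
           (\<lambda>z. \<Sum>x\<in>X. c x * segment_cauchy_integral (f \<omega>) (a x) (b x) z) sequentially"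
proof -
  have seg_U: "closed_segment (a x) (b x) \<subseteq> U" and seg_K: "closed_segment (a x) (b x) \<inter> K = {}"
    if "x \<in> X" for x
    using seg[OF that] by blast+
  define node where "node = (\<lambda>n (x, k). linepath (a x) (b x) (real k / real n))"
  define R where "R = (\<lambda>n \<omega>. partial_fraction_sum (X \<times> {..<n})
    (\<lambda>(x, k). c x * ((b x - a x) / of_nat n) * f \<omega> (node n (x, k))) (node n))"
  have node_seg: "node n (x, k) \<in> closed_segment (a x) (b x)" if "k < n" for n x k
    using that linepath_in_path[of "real k / real n"] by (simp add: node_def)
  have rational: "random_rational_no_poles_on M K (R n)" for n
    unfolding random_rational_no_poles_on_def
  proof (intro conjI ballI allI)
    show "rational_no_poles_on K (R n \<omega>)" for \<omega>
      unfolding R_def using X seg_K node_seg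
      by (intro rational_no_poles_on_partial_fraction_sum) fastforce+
    show "(\<lambda>\<omega>. R n \<omega> z) \<in> borel_measurable M" for z
      unfolding R_def
      by (intro borel_measurable_partial_fraction_sum)
         (auto intro!: borel_measurable_divide borel_measurable_times meas subsetD[OF seg_U node_seg])
  qed
  have "uniform_limit K (\<lambda>n. R n \<omega>)
      (\<lambda>z. \<Sum>x\<in>X. c x * segment_cauchy_integral (f \<omega>) (a x) (b x) z) sequentially"
    if \<omega>: "\<omega> \<in> space M" for \<omega>
  proof -
    have "R n \<omega> z = (\<Sum>x\<in>X. c x * segment_cauchy_sum (f \<omega>) (a x) (b x) n z)"
      if z: "z \<in> K" for n z
    proof -
      have "z \<notin> node n ` (X \<times> {..<n})" using z seg_K node_seg by fastforce
      then have "R n \<omega> z = (\<Sum>(x, k)\<in>X \<times> {..<n}.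
          c x * ((b x - a x) / of_nat n) * f \<omega> (node n (x, k)) / (node n (x, k) - z))"
        by (simp add: R_def partial_fraction_sum_def split_def)
      then show ?thesis
        by (simp add: sum.cartesian_product[symmetric] segment_cauchy_sum_def node_def
            sum_distrib_left mult.assoc)
    qed
    moreover have "uniform_limit K (\<lambda>n z. \<Sum>x\<in>X. c x * segment_cauchy_sum (f \<omega>) (a x) (b x) n z)
        (\<lambda>z. \<Sum>x\<in>X. c x * segment_cauchy_integral (f \<omega>) (a x) (b x) z) sequentially"
      using X seg_K seg_U continuous_on_subset[OF cont[OF \<omega>]]
      by (intro uniform_limit_sum uniform_limit_intros uniform_limit_segment_cauchy_sum K) blast+
    ultimately show ?thesis by (subst uniform_limit_cong') auto
  qed
  with rational show ?thesis using that by blast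
qed

section \<open>Cauchy's formula on a rectangle\<close>

lemma contour_integral_rectpath_sides:
  fixes a1 a3 :: complex
  defines "a2 \<equiv> Complex (Re a3) (Im a1)" and "a4 \<equiv> Complex (Re a1) (Im a3)"
  assumes cont: "continuous_on (path_image (rectpath a1 a3)) F"
  shows "contour_integral (rectpath a1 a3) F = contour_integral (linepath a1 a2) F
    + contour_integral (linepath a2 a3) F - contour_integral (linepath a4 a3) F
    - contour_integral (linepath a1 a4) F"
proof -
  have image: "path_image (rectpath a1 a3)
      = closed_segment a1 a2 \<union> closed_segment a2 a3 \<union> closed_segment a4 a3 \<union> closed_segment a1 a4"
    by (simp add: rectpath_def Let_def path_image_join closed_segment_commute a2_def a4_def Un_assoc)
  have int: "F contour_integrable_on linepath u v"
    and rev: "contour_integral (linepath u v) F = - contour_integral (linepath v u) F"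
    if "closed_segment u v \<subseteq> path_image (rectpath a1 a3)" for u v
    using continuous_on_subset[OF cont that]
    by (simp_all add: contour_integrable_continuous_linepath contour_integral_reverse_linepath)
  have "contour_integral (rectpath a1 a3) F = contour_integral (linepath a1 a2) F
      + contour_integral (linepath a2 a3) F + contour_integral (linepath a3 a4) F
      + contour_integral (linepath a4 a1) F"
  proof -
    have "F contour_integrable_on linepath a1 a2" "F contour_integrable_on linepath a2 a3"
      "F contour_integrable_on linepath a3 a4" "F contour_integrable_on linepath a4 a1"
      using int unfolding image by (auto simp: closed_segment_commute)
    then show ?thesis
      by (simp add: rectpath_def Let_def a2_def a4_def contour_integral_join
          contour_integrable_joinI valid_path_join)
  qed
  moreover have "contour_integral (linepath a3 a4) F = - contour_integral (linepath a4 a3) F"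
    "contour_integral (linepath a4 a1) F = - contour_integral (linepath a1 a4) F"
    by (rule rev, unfold image, auto simp: closed_segment_commute)+
  ultimately show ?thesis by simp
qed

lemma cauchy_rectpath_sides:
  fixes a1 a3 :: complex
  defines "a2 \<equiv> Complex (Re a3) (Im a1)" and "a4 \<equiv> Complex (Re a1) (Im a3)"
  assumes le: "Re a1 \<le> Re a3" "Im a1 \<le> Im a3" and holo: "g holomorphic_on cbox a1 a3"
    and z: "z \<notin> frontier (cbox a1 a3)"
  shows "segment_cauchy_integral g a1 a2 z + segment_cauchy_integral g a2 a3 z
      - segment_cauchy_integral g a4 a3 z - segment_cauchy_integral g a1 a4 z
    = (if z \<in> box a1 a3 then 2 * pi * \<i> * g z else 0)"
proof -
  have image: "path_image (rectpath a1 a3) = frontier (cbox a1 a3)"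
    using path_image_rectpath_cbox_minus_box[OF le] by (simp add: frontier_cbox)
  then have image_sub: "path_image (rectpath a1 a3) \<subseteq> cbox a1 a3 - {z}"
    using z frontier_subset_closed[OF closed_cbox] by blast
  have "continuous_on (path_image (rectpath a1 a3)) (\<lambda>w. g w / (w - z))"
    using image_sub holomorphic_on_imp_continuous_on[OF holo]
    by (intro continuous_intros) (auto elim: continuous_on_subset)
  then have sides: "segment_cauchy_integral g a1 a2 z + segment_cauchy_integral g a2 a3 z
      - segment_cauchy_integral g a4 a3 z - segment_cauchy_integral g a1 a4 z
    = contour_integral (rectpath a1 a3) (\<lambda>w. g w / (w - z))"
    by (simp add: contour_integral_rectpath_sides segment_cauchy_integral_def a2_def a4_def)
  have "((\<lambda>w. g w / (w - z)) has_contour_integral (if z \<in> box a1 a3 then 2 * pi * \<i> * g z else 0))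
      (rectpath a1 a3)"
  proof (cases "z \<in> box a1 a3")
    case True
    then show ?thesis
      using Cauchy_integral_formula_convex_simple[OF convex_box(1) holo _ _ image_sub]
      by (simp add: winding_number_rectpath)
  next
    case False
    then have "z \<notin> cbox a1 a3" using z by (simp add: frontier_cbox)
    then have "(\<lambda>w. g w / (w - z)) holomorphic_on cbox a1 a3"
      using holo by (intro holomorphic_intros) auto
    then have "((\<lambda>w. g w / (w - z)) has_contour_integral 0) (rectpath a1 a3)"
      by (rule Cauchy_theorem_convex_simple[OF _ convex_box(1)]) (use image_sub in auto)
    then show ?thesis using False by simp
  qed
  then show ?thesis unfolding sides by (rule contour_integral_unique)
qed

section \<open>A square grid\<close>

definition grid_corner :: "real \<Rightarrow> int \<times> int \<Rightarrow> complex"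
  where "grid_corner \<delta> q = Complex (of_int (fst q) * \<delta>) (of_int (snd q) * \<delta>)"

definition grid_right :: "int \<times> int \<Rightarrow> int \<times> int" where "grid_right q = (fst q + 1, snd q)"

definition grid_up :: "int \<times> int \<Rightarrow> int \<times> int" where "grid_up q = (fst q, snd q + 1)"

definition grid_cell :: "real \<Rightarrow> int \<times> int \<Rightarrow> complex set"
  where "grid_cell \<delta> q = cbox (grid_corner \<delta> q) (grid_corner \<delta> (grid_up (grid_right q)))"

lemma mem_grid_cell_iff:
  "z \<in> grid_cell \<delta> q \<longleftrightarrow>
    of_int (fst q) * \<delta> \<le> Re z \<and> Re z \<le> of_int (fst q) * \<delta> + \<delta> \<and>
    of_int (snd q) * \<delta> \<le> Im z \<and> Im z \<le> of_int (snd q) * \<delta> + \<delta>"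
  by (simp add: grid_cell_def in_cbox_complex_iff grid_corner_def grid_up_def grid_right_def
      distrib_right)

lemma mem_interior_grid_cell_iff:
  "z \<in> interior (grid_cell \<delta> q) \<longleftrightarrow>
    of_int (fst q) * \<delta> < Re z \<and> Re z < of_int (fst q) * \<delta> + \<delta> \<and>
    of_int (snd q) * \<delta> < Im z \<and> Im z < of_int (snd q) * \<delta> + \<delta>"
  by (simp add: grid_cell_def in_box_complex_iff grid_corner_def grid_up_def grid_right_def
      distrib_right)

lemma mem_grid_cell_floor:
  assumes "\<delta> > 0"
  shows "z \<in> grid_cell \<delta> (\<lfloor>Re z / \<delta>\<rfloor>, \<lfloor>Im z / \<delta>\<rfloor>)"
  using floor_divide_lower[OF assms] floor_divide_upper[OF assms]
  by (simp add: mem_grid_cell_iff distrib_right less_imp_le)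

lemma grid_index_unique:
  fixes x \<delta> :: real
  assumes "\<delta> > 0" "of_int i * \<delta> < x" "x < of_int i * \<delta> + \<delta>"
    "of_int i' * \<delta> \<le> x" "x \<le> of_int i' * \<delta> + \<delta>"
  shows "i' = i"
proof -
  have "of_int i' * \<delta> < (of_int i + 1) * \<delta>" "of_int i * \<delta> < (of_int i' + 1) * \<delta>"
    using assms by (simp_all add: distrib_right)
  then have "of_int i' < (of_int i + 1 :: real)" "of_int i < (of_int i' + 1 :: real)"
    using assms(1) by (simp_all only: mult_less_cancel_right_pos)
  then show ?thesis by linarith
qed

lemma grid_cell_eq_if_interior:
  assumes "\<delta> > 0" "z \<in> interior (grid_cell \<delta> q)" "z \<in> grid_cell \<delta> q'"
  shows "q' = q"
  using grid_index_unique[OF assms(1), of "fst q" "Re z" "fst q'"]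
    grid_index_unique[OF assms(1), of "snd q" "Im z" "snd q'"] assms(2,3)
  by (auto simp: mem_grid_cell_iff mem_interior_grid_cell_iff prod_eq_iff)

lemma grid_cell_dist_le:
  assumes "x \<in> grid_cell \<delta> q" "w \<in> grid_cell \<delta> q"
  shows "dist x w \<le> 2 * \<delta>"
proof -
  have "\<bar>Re (x - w)\<bar> \<le> \<delta>" "\<bar>Im (x - w)\<bar> \<le> \<delta>"
    using assms unfolding mem_grid_cell_iff by auto
  then show ?thesis using cmod_le[of "x - w"] by (simp add: dist_norm)
qed

lemma grid_index_bound:
  fixes x \<delta> B :: real
  assumes "\<delta> > 0" "of_int i * \<delta> \<le> x" "x \<le> of_int i * \<delta> + \<delta>" "\<bar>x\<bar> \<le> B"
  shows "\<bar>i\<bar> \<le> \<lceil>B / \<delta>\<rceil> + 1"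
proof -
  have "\<bar>of_int i\<bar> * \<delta> \<le> B + \<delta>"
    using assms by (auto simp: abs_mult abs_le_iff)
  then have "\<bar>of_int i\<bar> \<le> (B + \<delta>) / \<delta>"
    using assms(1) by (simp add: pos_le_divide_eq)
  also have "\<dots> = B / \<delta> + 1"
    using assms(1) by (simp add: add_divide_distrib)
  finally show ?thesis using le_of_int_ceiling[of "B / \<delta>"] by linarith
qed

definition cells_meeting :: "real \<Rightarrow> complex set \<Rightarrow> (int \<times> int) set"
  where "cells_meeting \<delta> K = {q. grid_cell \<delta> q \<inter> K \<noteq> {}}"

lemma finite_cells_meeting:
  assumes "\<delta> > 0" "bounded K"
  shows "finite (cells_meeting \<delta> K)"
proof -
  obtain B where B: "\<And>z. z \<in> K \<Longrightarrow> norm z \<le> B"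
    using assms(2) bounded_iff by blast
  define N where "N = \<lceil>B / \<delta>\<rceil> + 1"
  have "cells_meeting \<delta> K \<subseteq> {-N..N} \<times> {-N..N}"
  proof
    fix q assume "q \<in> cells_meeting \<delta> K"
    then obtain w where w: "w \<in> grid_cell \<delta> q" "w \<in> K" by (auto simp: cells_meeting_def)
    have "\<bar>Re w\<bar> \<le> B" "\<bar>Im w\<bar> \<le> B"
      using B[OF w(2)] abs_Re_le_cmod abs_Im_le_cmod order_trans by blast+
    then have "\<bar>fst q\<bar> \<le> N" "\<bar>snd q\<bar> \<le> N"
      using w(1) grid_index_bound[OF assms(1)] unfolding N_def mem_grid_cell_iff by blast+
    then show "q \<in> {-N..N} \<times> {-N..N}" by (auto simp: mem_Times_iff abs_le_iff)
  qed
  then show ?thesis by (rule finite_subset) simp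
qed

section \<open>Cauchy's formula along the boundary of a union of cells\<close>

text \<open>The Cauchy integral around a cell, written as a sum over its sides: in this form it is
  defined for every \<open>z\<close>, and the sides shared by neighbouring cells visibly cancel.\<close>
definition cell_boundary_integral ::
    "real \<Rightarrow> (complex \<Rightarrow> complex) \<Rightarrow> int \<times> int \<Rightarrow> complex \<Rightarrow> complex"
  where "cell_boundary_integral \<delta> g q z =
    segment_cauchy_integral g (grid_corner \<delta> q) (grid_corner \<delta> (grid_right q)) z
    + segment_cauchy_integral g
        (grid_corner \<delta> (grid_right q)) (grid_corner \<delta> (grid_up (grid_right q))) z
    - segment_cauchy_integral g
        (grid_corner \<delta> (grid_up q)) (grid_corner \<delta> (grid_up (grid_right q))) z
    - segment_cauchy_integral g (grid_corner \<delta> q) (grid_corner \<delta> (grid_up q)) z"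

lemma cell_boundary_integral_cauchy:
  assumes "\<delta> > 0" "g holomorphic_on grid_cell \<delta> q" "z \<notin> frontier (grid_cell \<delta> q)"
  shows "cell_boundary_integral \<delta> g q z =
    (if z \<in> interior (grid_cell \<delta> q) then 2 * pi * \<i> * g z else 0)"
  using cauchy_rectpath_sides[of "grid_corner \<delta> q" "grid_corner \<delta> (grid_up (grid_right q))" g z]
    assms
  by (simp add: cell_boundary_integral_def grid_cell_def grid_corner_def grid_up_def grid_right_def)

lemma sum_cell_boundary_integrals_interior:
  assumes \<delta>: "\<delta> > 0" and "finite S" "q0 \<in> S"
    and holo: "\<And>q. q \<in> S \<Longrightarrow> g holomorphic_on grid_cell \<delta> q"
    and z: "z \<in> interior (grid_cell \<delta> q0)"
  shows "(\<Sum>q\<in>S. cell_boundary_integral \<delta> g q z) = 2 * pi * \<i> * g z"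
proof -
  have "cell_boundary_integral \<delta> g q z = 0" if "q \<in> S - {q0}" for q
  proof -
    have "z \<notin> grid_cell \<delta> q" using grid_cell_eq_if_interior[OF \<delta> z] that by blast
    moreover have "frontier (grid_cell \<delta> q) \<subseteq> grid_cell \<delta> q"
      unfolding grid_cell_def by (rule frontier_subset_closed[OF closed_cbox])
    ultimately have "z \<notin> frontier (grid_cell \<delta> q)" "z \<notin> interior (grid_cell \<delta> q)"
      using interior_subset by blast+
    then show ?thesis using cell_boundary_integral_cauchy[OF \<delta> holo] that by simp
  qed
  moreover have "cell_boundary_integral \<delta> g q0 z = 2 * pi * \<i> * g z"
    using cell_boundary_integral_cauchy[OF \<delta> holo[OF \<open>q0 \<in> S\<close>]] z by (simp add: frontier_def)
  ultimately show ?thesis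
    using sum.remove[OF \<open>finite S\<close> \<open>q0 \<in> S\<close>, of "\<lambda>q. cell_boundary_integral \<delta> g q z"] by simp
qed

text \<open>Edge \<open>(q, True)\<close> is the bottom side of cell \<open>q\<close>, and \<open>(q, False)\<close> its left side.\<close>
definition grid_edge_start :: "real \<Rightarrow> (int \<times> int) \<times> bool \<Rightarrow> complex"
  where "grid_edge_start \<delta> e = grid_corner \<delta> (fst e)"

definition grid_edge_end :: "real \<Rightarrow> (int \<times> int) \<times> bool \<Rightarrow> complex"
  where "grid_edge_end \<delta> e = grid_corner \<delta> (if snd e then grid_right (fst e) else grid_up (fst e))"

text \<open>The multiplicity of an edge in the sum of the boundaries of the cells in \<open>S\<close>.\<close>
definition grid_edge_coeff :: "(int \<times> int) set \<Rightarrow> (int \<times> int) \<times> bool \<Rightarrow> complex"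
  where "grid_edge_coeff S e =
    (if snd e then of_bool (fst e \<in> S) - of_bool (fst e \<in> grid_up ` S)
     else of_bool (fst e \<in> grid_right ` S) - of_bool (fst e \<in> S))"

definition boundary_edges :: "(int \<times> int) set \<Rightarrow> ((int \<times> int) \<times> bool) set"
  where "boundary_edges S = {e. grid_edge_coeff S e \<noteq> 0}"

lemma boundary_edges_subset: "boundary_edges S \<subseteq> (S \<union> grid_up ` S \<union> grid_right ` S) \<times> UNIV"
  by (auto simp: boundary_edges_def grid_edge_coeff_def split: if_splits)

lemma finite_boundary_edges: "finite S \<Longrightarrow> finite (boundary_edges S)"
  by (rule finite_subset[OF boundary_edges_subset]) simp

lemma sum_cell_boundary_integrals_eq_edges:
  assumes "finite S"
  shows "(\<Sum>q\<in>S. cell_boundary_integral \<delta> g q z) = (\<Sum>e\<in>boundary_edges S.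
    grid_edge_coeff S e * segment_cauchy_integral g (grid_edge_start \<delta> e) (grid_edge_end \<delta> e) z)"
proof -
  define T where "T = S \<union> grid_up ` S \<union> grid_right ` S"
  define H where
    "H q = segment_cauchy_integral g (grid_corner \<delta> q) (grid_corner \<delta> (grid_right q)) z" for q
  define V where
    "V q = segment_cauchy_integral g (grid_corner \<delta> q) (grid_corner \<delta> (grid_up q)) z" for q
  have T: "finite T" using assms by (simp add: T_def)
  have restrict: "T \<inter> S = S" "T \<inter> grid_up ` S = grid_up ` S" "T \<inter> grid_right ` S = grid_right ` S"
    by (auto simp: T_def)
  have inj: "inj_on grid_right S" "inj_on grid_up S"
    by (auto simp: inj_on_def grid_right_def grid_up_def prod_eq_iff)
  have "(\<Sum>q\<in>S. cell_boundary_integral \<delta> g q z)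
      = sum H S + sum (V \<circ> grid_right) S - sum (H \<circ> grid_up) S - sum V S"
    by (simp add: cell_boundary_integral_def H_def V_def sum.distrib sum_subtractf
        grid_right_def grid_up_def)
  also have "\<dots> = sum H S + sum V (grid_right ` S) - sum H (grid_up ` S) - sum V S"
    by (simp add: sum.reindex inj)
  also have "\<dots> = (\<Sum>q\<in>T. (of_bool (q \<in> S) - of_bool (q \<in> grid_up ` S)) * H q
      + (of_bool (q \<in> grid_right ` S) - of_bool (q \<in> S)) * V q)"
    using T by (simp add: left_diff_distrib sum.distrib sum_subtractf restrict)
  also have "\<dots> = (\<Sum>e\<in>T \<times> UNIV.
      grid_edge_coeff S e * segment_cauchy_integral g (grid_edge_start \<delta> e) (grid_edge_end \<delta> e) z)"
    by (simp add: sum.cartesian_product' UNIV_bool grid_edge_coeff_def grid_edge_start_def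
        grid_edge_end_def H_def V_def add.commute)
  also have "\<dots> = (\<Sum>e\<in>boundary_edges S.
      grid_edge_coeff S e * segment_cauchy_integral g (grid_edge_start \<delta> e) (grid_edge_end \<delta> e) z)"
    using T boundary_edges_subset[of S]
    by (intro sum.mono_neutral_right) (auto simp: T_def boundary_edges_def)
  finally show ?thesis .
qed

lemma boundary_edge_between_cells:
  assumes "\<delta> > 0" "e \<in> boundary_edges S"
  obtains q q' where "q \<in> S" "q' \<notin> S"
    "closed_segment (grid_edge_start \<delta> e) (grid_edge_end \<delta> e) \<subseteq> grid_cell \<delta> q \<inter> grid_cell \<delta> q'"
proof -
  obtain p b where e: "e = (p, b)" by (cases e)
  define p' where "p' = (if b then (fst p, snd p - 1) else (fst p - 1, snd p))"
  have "grid_edge_start \<delta> e \<in> grid_cell \<delta> p \<inter> grid_cell \<delta> p'"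
    "grid_edge_end \<delta> e \<in> grid_cell \<delta> p \<inter> grid_cell \<delta> p'"
    using assms(1) by (auto simp: e p'_def grid_edge_start_def grid_edge_end_def grid_corner_def
        grid_right_def grid_up_def mem_grid_cell_iff algebra_simps)
  then have seg: "closed_segment (grid_edge_start \<delta> e) (grid_edge_end \<delta> e)
      \<subseteq> grid_cell \<delta> p \<inter> grid_cell \<delta> p'"
    by (intro closed_segment_subset convex_Int) (auto simp: grid_cell_def)
  have "p \<in> grid_up ` S \<longleftrightarrow> (fst p, snd p - 1) \<in> S"
    "p \<in> grid_right ` S \<longleftrightarrow> (fst p - 1, snd p) \<in> S"
    by (force simp: grid_up_def grid_right_def)+
  then have "(p \<in> S) \<noteq> (p' \<in> S)"
    using assms(2) by (auto simp: e p'_def boundary_edges_def grid_edge_coeff_def split: if_splits)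
  then show ?thesis
    by (cases "p \<in> S") (use that[of p p'] that[of p' p] seg in \<open>auto simp: Int_commute\<close>)
qed

lemma boundary_edge_cells_meeting_subset:
  assumes "\<delta> > 0" "\<And>q. q \<in> cells_meeting \<delta> K \<Longrightarrow> grid_cell \<delta> q \<subseteq> U"
    and "e \<in> boundary_edges (cells_meeting \<delta> K)"
  shows "closed_segment (grid_edge_start \<delta> e) (grid_edge_end \<delta> e) \<subseteq> U - K"
  using assms by (elim boundary_edge_between_cells) (auto simp: cells_meeting_def)

lemma cauchy_integral_formula_grid_boundary:
  assumes \<delta>: "\<delta> > 0" and fin: "finite (cells_meeting \<delta> K)"
    and cells_U: "\<And>q. q \<in> cells_meeting \<delta> K \<Longrightarrow> grid_cell \<delta> q \<subseteq> U"
    and U: "open U" and holo: "g holomorphic_on U" and z: "z \<in> K"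
  shows "(\<Sum>e\<in>boundary_edges (cells_meeting \<delta> K). grid_edge_coeff (cells_meeting \<delta> K) e *
      segment_cauchy_integral g (grid_edge_start \<delta> e) (grid_edge_end \<delta> e) z) = 2 * pi * \<i> * g z"
    (is "?F z = _")
proof -
  define S where "S = cells_meeting \<delta> K"
  define q0 where "q0 = (\<lfloor>Re z / \<delta>\<rfloor>, \<lfloor>Im z / \<delta>\<rfloor>)"
  have z_cell: "z \<in> grid_cell \<delta> q0" using mem_grid_cell_floor[OF \<delta>] by (simp add: q0_def)
  then have q0: "q0 \<in> S" using z by (auto simp: S_def cells_meeting_def)
  have contU: "continuous_on U g" using holo by (rule holomorphic_on_imp_continuous_on)
  have cont_F: "isCont ?F z"
  proof (intro continuous_intros)
    fix e assume "e \<in> boundary_edges (cells_meeting \<delta> K)"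
    then have "closed_segment (grid_edge_start \<delta> e) (grid_edge_end \<delta> e) \<subseteq> U - K"
      using boundary_edge_cells_meeting_subset[OF \<delta> cells_U] by blast
    then show "isCont (segment_cauchy_integral g (grid_edge_start \<delta> e) (grid_edge_end \<delta> e)) z"
      using z by (intro isCont_segment_cauchy_integral continuous_on_subset[OF contU]) auto
  qed
  txt \<open>The cellwise formula fails when \<open>z\<close> lies on a side of a cell; but both sides of
    the identity are continuous at \<open>z\<close> (the edges avoid \<open>K\<close>), so we may approach \<open>z\<close>
    from the interior of its cell.\<close>
  have "interior (grid_cell \<delta> q0) \<noteq> {}"
    using \<delta> by (auto simp: grid_cell_def box_ne_empty grid_corner_def grid_up_def grid_right_def
        Basis_complex_def distrib_right)
  then have "z \<in> closure (interior (grid_cell \<delta> q0))"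
    using z_cell by (simp add: grid_cell_def)
  then obtain zs where zs: "\<And>n. zs n \<in> interior (grid_cell \<delta> q0)" "zs \<longlonglongrightarrow> z"
    unfolding closure_sequential by blast
  have eq: "?F (zs n) = 2 * pi * \<i> * g (zs n)" for n
    using sum_cell_boundary_integrals_interior[OF \<delta> _ q0 _ zs(1)]
      sum_cell_boundary_integrals_eq_edges fin cells_U holomorphic_on_subset[OF holo]
    by (simp add: S_def)
  have "z \<in> U" using z_cell cells_U q0 unfolding S_def by blast
  then have "isCont g z"
    using contU U by (simp add: continuous_on_eq_continuous_at)
  then have "(\<lambda>n. ?F (zs n)) \<longlonglongrightarrow> 2 * pi * \<i> * g z"
    unfolding eq by (intro tendsto_mult_left isCont_tendsto_compose[OF _ zs(2)])
  moreover have "(\<lambda>n. ?F (zs n)) \<longlonglongrightarrow> ?F z"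
    using cont_F zs(2) by (rule isCont_tendsto_compose)
  ultimately show ?thesis by (rule LIMSEQ_unique[symmetric])
qed

lemma cauchy_integral_formula_segments:
  assumes "open U" "compact K" "K \<subseteq> U"
  obtains X :: "((int \<times> int) \<times> bool) set" and a b c :: "(int \<times> int) \<times> bool \<Rightarrow> complex"
  where "finite X" "\<And>x. x \<in> X \<Longrightarrow> closed_segment (a x) (b x) \<subseteq> U - K"
    "\<And>g z. g holomorphic_on U \<Longrightarrow> z \<in> K \<Longrightarrow>
       g z = (\<Sum>x\<in>X. c x * segment_cauchy_integral g (a x) (b x) z)"
proof -
  obtain \<epsilon> where \<epsilon>: "\<epsilon> > 0" and \<epsilon>U: "(\<Union>x\<in>K. cball x \<epsilon>) \<subseteq> U"
    using compact_subset_open_imp_cball_epsilon_subset[OF assms(2,1,3)] by blast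
  define \<delta> where "\<delta> = \<epsilon> / 2"
  define S where "S = cells_meeting \<delta> K"
  have \<delta>: "\<delta> > 0" using \<epsilon> by (simp add: \<delta>_def)
  have fin: "finite S"
    unfolding S_def using \<delta> compact_imp_bounded[OF assms(2)] by (rule finite_cells_meeting)
  have cells_U: "grid_cell \<delta> q \<subseteq> U" if q: "q \<in> S" for q
  proof
    fix w assume w: "w \<in> grid_cell \<delta> q"
    obtain x where "x \<in> grid_cell \<delta> q" "x \<in> K" using q unfolding S_def cells_meeting_def by blast
    then have "w \<in> cball x \<epsilon>" using grid_cell_dist_le[OF _ w] by (simp add: \<delta>_def)
    then show "w \<in> U" using \<epsilon>U \<open>x \<in> K\<close> by blast
  qed
  show ?thesis
  proof (rule that[of "boundary_edges S" "grid_edge_start \<delta>" "grid_edge_end \<delta>"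
        "\<lambda>e. grid_edge_coeff S e / (2 * pi * \<i>)"])
    show "finite (boundary_edges S)" using fin by (rule finite_boundary_edges)
    show "closed_segment (grid_edge_start \<delta> e) (grid_edge_end \<delta> e) \<subseteq> U - K"
      if "e \<in> boundary_edges S" for e
      using boundary_edge_cells_meeting_subset[OF \<delta> cells_U] that by (simp add: S_def)
    show "g z = (\<Sum>e\<in>boundary_edges S. grid_edge_coeff S e / (2 * pi * \<i>) *
        segment_cauchy_integral g (grid_edge_start \<delta> e) (grid_edge_end \<delta> e) z)"
      if "g holomorphic_on U" "z \<in> K" for g z
    proof -
      have "(\<Sum>e\<in>boundary_edges S. grid_edge_coeff S e *
          segment_cauchy_integral g (grid_edge_start \<delta> e) (grid_edge_end \<delta> e) z)
        = 2 * pi * \<i> * g z"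
        unfolding S_def
        by (rule cauchy_integral_formula_grid_boundary[OF \<delta> _ _ assms(1) that])
           (use fin cells_U in \<open>simp_all add: S_def\<close>)
      then show ?thesis by (simp add: sum_divide_distrib[symmetric])
    qed
  qed
qed

theorem theorem3p2:
  fixes M :: "'a measure" and U K :: "complex set" and f :: "'a \<Rightarrow> complex \<Rightarrow> complex"
  assumes "open U" and "random_holomorphic M U f" and "compact K" and "K \<subseteq> U"
  shows "\<exists>R :: nat \<Rightarrow> 'a \<Rightarrow> complex \<Rightarrow> complex.
           (\<forall>n. random_rational_no_poles_on M K (R n)) \<and>
           (\<forall>\<omega>\<in>space M. uniform_limit K (\<lambda>n. R n \<omega>) (f \<omega>) sequentially)"
proof -
  have holo: "\<And>\<omega>. \<omega> \<in> space M \<Longrightarrow> f \<omega> holomorphic_on U"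
    and meas: "\<And>z. z \<in> U \<Longrightarrow> (\<lambda>\<omega>. f \<omega> z) \<in> borel_measurable M"
    using assms(2) unfolding random_holomorphic_def by blast+
  obtain X :: "((int \<times> int) \<times> bool) set" and a b c
    where X: "finite X" and seg: "\<And>x. x \<in> X \<Longrightarrow> closed_segment (a x) (b x) \<subseteq> U - K"
    and cauchy: "\<And>g z. g holomorphic_on U \<Longrightarrow> z \<in> K \<Longrightarrow>
       g z = (\<Sum>x\<in>X. c x * segment_cauchy_integral g (a x) (b x) z)"
    using cauchy_integral_formula_segments[OF assms(1,3,4)] by blast
  obtain R where rational: "\<And>n. random_rational_no_poles_on M K (R n)"
    and limit: "\<And>\<omega>. \<omega> \<in> space M \<Longrightarrow> uniform_limit K (\<lambda>n. R n \<omega>)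
      (\<lambda>z. \<Sum>x\<in>X. c x * segment_cauchy_integral (f \<omega>) (a x) (b x) z) sequentially"
    using random_rational_approx_segment_integrals[where a = a and b = b and c = c,
        OF X assms(3) seg holomorphic_on_imp_continuous_on[OF holo] meas] by blast
  have "uniform_limit K (\<lambda>n. R n \<omega>) (f \<omega>) sequentially" if "\<omega> \<in> space M" for \<omega>
  proof -
    have "uniform_limit K (\<lambda>n. R n \<omega>)
        (\<lambda>z. \<Sum>x\<in>X. c x * segment_cauchy_integral (f \<omega>) (a x) (b x) z) sequentially
      \<longleftrightarrow> uniform_limit K (\<lambda>n. R n \<omega>) (f \<omega>) sequentially"
      by (rule uniform_limit_cong') (simp_all add: cauchy[OF holo[OF that]])
    then show ?thesis using limit[OF that] by blast
  qed
  with rational show ?thesis by blast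
qed

end
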